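(* Let $\mathscr{S}=(T,S,\sigma,\mu,\tau_T,\tau_S)$ be a relaxed scenario. Then $G_{<}(\mathscr{S})$ and $G_{>}(\mathscr{S})$ are cographs. If both $S$ and $T$ are binary trees, then $G_{=}(\mathscr{S})$ is also a cograph.
   Context: All trees are planted phylogenetic trees: a tree $T$ has a distinguished vertex $0_T$ of degree $1$ whose unique neighbor $\rho_T$ is the root, and every vertex other than $0_T$ and the leaves $L(T)$ has at least two children; it is binary if every such vertex has exactly two children. For $x,y\in V(T)$ write $y\preceq_T x$ if $x$ lies on the path from $0_T$ to $y$; edges are written $uv$ with $v\prec_T u$. $\mathrm{lca}_T$ denotes the last common ancestor. A time map for $T$ is $\tau_T\colon V(T)\to\mathbb{R}$ with $\tau_T(x)<\tau_T(y)$ whenever $x\prec_T y$. A relaxed scenario $\mathscr{S}=(T,S,\sigma,\mu,\tau_T,\tau_S)$ consists of a gene tree $T$ with time map $\tau_T$, a species tree $S$ with time map $\tau_S$, a map $\sigma\colon L(T)\to M$ with $M\subseteq L(S)$, and a map $\mu\colon V(T)\to V(S)\cup E(S)$ such that (S0) $\mu(x)=0_S$ iff $x=0_T$; (S1) $\mu(x)\in L(S)$ iff $x\in L(T)$, in which case $\mu(x)=\sigma(x)$; (S2) if $\mu(x)\in V(S)$ then $\tau_S(\mu(x))=\tau_T(x)$; (S3) if $\mu(x)=uv\in E(S)$ then $\tau_S(v)<\tau_T(x)<\tau_S(u)$. The graphs $G_{=}(\mathscr{S})$, $G_{<}(\mathscr{S})$, $G_{>}(\mathscr{S})$ have vertex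 set $L(T)$, and for distinct $x,y$ the pair $xy$ is an edge of $G_{=}(\mathscr{S})$, $G_{<}(\mathscr{S})$, resp. $G_{>}(\mathscr{S})$ iff $\tau_T(\mathrm{lca}_T(x,y))$ is $=$, $<$, resp. $>$ than $\tau_S(\mathrm{lca}_S(\sigma(x),\sigma(y)))$. A cograph is a graph with no induced path on four vertices. *)

theory Defs
  imports Main "HOL.Real"
begin

text \<open>A rooted tree is given by a vertex set V, a set E of directed edges (u,v)
  meaning v is a child of u (so v \<prec> u), and the planting vertex r0 (= 0_T).\<close>

definition children :: "('a \<times> 'a) set \<Rightarrow> 'a \<Rightarrow> 'a set" where
  "children E u = {v. (u, v) \<in> E}"

definition leaves :: "'a set \<Rightarrow> ('a \<times> 'a) set \<Rightarrow> 'a set" where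
  "leaves V E = {v \<in> V. children E v = {}}"

definition planted_tree :: "'a set \<Rightarrow> ('a \<times> 'a) set \<Rightarrow> 'a \<Rightarrow> bool" where
  "planted_tree V E r0 \<longleftrightarrow>
     finite V \<and> r0 \<in> V \<and> E \<subseteq> V \<times> V \<and>
     (\<forall>u. (u, r0) \<notin> E) \<and>
     (\<forall>v\<in>V. v \<noteq> r0 \<longrightarrow> (\<exists>!u. (u, v) \<in> E)) \<and>
     (\<forall>v\<in>V. (r0, v) \<in> E\<^sup>*) \<and>
     card (children E r0) = 1"

definition phylo_tree :: "'a set \<Rightarrow> ('a \<times> 'a) set \<Rightarrow> 'a \<Rightarrow> bool" where
  "phylo_tree V E r0 \<longleftrightarrow> planted_tree V E r0 \<and>
     (\<forall>v\<in>V. v \<noteq> r0 \<and> v \<notin> leaves V E \<longrightarrow> card (children E v) \<ge> 2)"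

definition binary_tree :: "'a set \<Rightarrow> ('a \<times> 'a) set \<Rightarrow> 'a \<Rightarrow> bool" where
  "binary_tree V E r0 \<longleftrightarrow> phylo_tree V E r0 \<and>
     (\<forall>v\<in>V. v \<noteq> r0 \<and> v \<notin> leaves V E \<longrightarrow> card (children E v) = 2)"

text \<open>y \<preceq> x  iff  (x,y) is in the reflexive transitive closure of E.  The last common ancestor is the common ancestor
  that lies below all other common ancestors.\<close>
definition lca :: "'a set \<Rightarrow> ('a \<times> 'a) set \<Rightarrow> 'a \<Rightarrow> 'a \<Rightarrow> 'a" where
  "lca V E x y = (THE z. z \<in> V \<and> (z, x) \<in> E\<^sup>* \<and> (z, y) \<in> E\<^sup>* \<and>
      (\<forall>w\<in>V. (w, x) \<in> E\<^sup>* \<and> (w, y) \<in> E\<^sup>* \<longrightarrow> (w, z) \<in> E\<^sup>*))"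

definition time_map :: "'a set \<Rightarrow> ('a \<times> 'a) set \<Rightarrow> ('a \<Rightarrow> real) \<Rightarrow> bool" where
  "time_map V E \<tau> \<longleftrightarrow> (\<forall>x\<in>V. \<forall>y\<in>V. (y, x) \<in> E\<^sup>+ \<longrightarrow> \<tau> x < \<tau> y)"

text \<open>Images of the reconciliation map: a vertex or an edge uv (v child of u).\<close>
datatype 'a vert_or_edge = Vtx 'a | Edg 'a 'a

definition relaxed_scenario ::
  "'g set \<Rightarrow> ('g \<times> 'g) set \<Rightarrow> 'g \<Rightarrow> 's set \<Rightarrow> ('s \<times> 's) set \<Rightarrow> 's \<Rightarrow>
   ('g \<Rightarrow> 's) \<Rightarrow> ('g \<Rightarrow> 's vert_or_edge) \<Rightarrow> ('g \<Rightarrow> real) \<Rightarrow> ('s \<Rightarrow> real) \<Rightarrow> bool" where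
  "relaxed_scenario VT ET r0T VS ES r0S \<sigma> \<mu> \<tau>T \<tau>S \<longleftrightarrow>
     phylo_tree VT ET r0T \<and> phylo_tree VS ES r0S \<and>
     time_map VT ET \<tau>T \<and> time_map VS ES \<tau>S \<and>
     \<sigma> ` leaves VT ET \<subseteq> leaves VS ES \<and>
     (\<forall>x\<in>VT. (\<exists>v\<in>VS. \<mu> x = Vtx v) \<or> (\<exists>u v. (u, v) \<in> ES \<and> \<mu> x = Edg u v)) \<and>
     (\<forall>x\<in>VT. \<mu> x = Vtx r0S \<longleftrightarrow> x = r0T) \<and>
     (\<forall>x\<in>VT. (\<exists>v\<in>leaves VS ES. \<mu> x = Vtx v) \<longleftrightarrow> x \<in> leaves VT ET) \<and>
     (\<forall>x\<in>leaves VT ET. \<mu> x = Vtx (\<sigma> x)) \<and>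
     (\<forall>x\<in>VT. \<forall>v. \<mu> x = Vtx v \<longrightarrow> \<tau>S v = \<tau>T x) \<and>
     (\<forall>x\<in>VT. \<forall>u v. \<mu> x = Edg u v \<longrightarrow> \<tau>S v < \<tau>T x \<and> \<tau>T x < \<tau>S u)"

definition G_rel ::
  "(real \<Rightarrow> real \<Rightarrow> bool) \<Rightarrow> 'g set \<Rightarrow> ('g \<times> 'g) set \<Rightarrow> 's set \<Rightarrow> ('s \<times> 's) set \<Rightarrow>
   ('g \<Rightarrow> 's) \<Rightarrow> ('g \<Rightarrow> real) \<Rightarrow> ('s \<Rightarrow> real) \<Rightarrow> 'g \<Rightarrow> 'g \<Rightarrow> bool" where
  "G_rel R VT ET VS ES \<sigma> \<tau>T \<tau>S x y \<longleftrightarrow>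
     x \<noteq> y \<and> R (\<tau>T (lca VT ET x y)) (\<tau>S (lca VS ES (\<sigma> x) (\<sigma> y)))"

definition cograph :: "'a set \<Rightarrow> ('a \<Rightarrow> 'a \<Rightarrow> bool) \<Rightarrow> bool" where
  "cograph V adj \<longleftrightarrow> \<not> (\<exists>a\<in>V. \<exists>b\<in>V. \<exists>c\<in>V. \<exists>d\<in>V.
     distinct [a, b, c, d] \<and> adj a b \<and> adj b c \<and> adj c d \<and>
     \<not> adj a c \<and> \<not> adj b d \<and> \<not> adj a d)"

end

theory Submission
  imports Defs
begin

text \<open>
  Times of last common ancestors are ultrametric: lca(x,z) lies below lca(x,y) or below
  lca(y,z), because these two are ancestors of y and the ancestors of a vertex form a chain. Hence
  t(x,y) = \<tau>T(lca(x,y)) and s(x,y) = \<tau>S(lca(\<sigma> x, \<sigma> y)) are both ultrametric on L(T), and then an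
  induced path a-b-c-d of G< is impossible: the triangles abc and bcd give
  s(a,b) = s(b,c) = s(c,d) > t(a,c), t(b,d), and then the triangles abd and acd give
  t(a,c) = t(a,d) \<ge> s(a,d) = s(a,b), a contradiction. The graph G> is G< with t and s exchanged.
  For G= the triangles must be strictly isosceles, which holds in binary trees since three
  distinct leaves cannot lie below three different children of their common lca. Genes of a
  common species are exempt: they are never adjacent in G=, as their lca is older than the
  species leaf.
\<close>

text \<open>Unlike for a metric, d x x need not vanish: for lca times it is the time of x itself.\<close>
definition ultrametric_on :: "'a set \<Rightarrow> ('a \<Rightarrow> 'a \<Rightarrow> real) \<Rightarrow> bool" where
  "ultrametric_on L d \<longleftrightarrow>
     (\<forall>x\<in>L. \<forall>y\<in>L. d x y = d y x) \<and> (\<forall>x\<in>L. \<forall>y\<in>L. \<forall>z\<in>L. d x z \<le> max (d x y) (d y z))"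

lemma ultrametric_on_commute:
  "ultrametric_on L d \<Longrightarrow> x \<in> L \<Longrightarrow> y \<in> L \<Longrightarrow> d x y = d y x"
  unfolding ultrametric_on_def by blast

lemma ultrametric_on_le_max:
  "ultrametric_on L d \<Longrightarrow> x \<in> L \<Longrightarrow> y \<in> L \<Longrightarrow> z \<in> L \<Longrightarrow> d x z \<le> max (d x y) (d y z)"
  unfolding ultrametric_on_def by blast

lemma ultrametric_on_isosceles:
  assumes "ultrametric_on L d" "x \<in> L" "y \<in> L" "z \<in> L" "d x z < max (d x y) (d y z)"
  shows "d x y = d y z"
  using ultrametric_on_le_max[OF assms(1) assms(3,2,4)] ultrametric_on_le_max[OF assms(1) assms(2,4,3)]
    ultrametric_on_commute[OF assms(1)] assms
  by (smt (verit))

lemma ultrametric_on_eq_max: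
  assumes "ultrametric_on L d" "x \<in> L" "y \<in> L" "z \<in> L" "d x y \<noteq> d y z"
  shows "d x z = max (d x y) (d y z)"
  using ultrametric_on_isosceles[OF assms(1-4)] ultrametric_on_le_max[OF assms(1-4)] assms(5)
  by linarith

lemma ultrametric_on_subset: "ultrametric_on B d \<Longrightarrow> A \<subseteq> B \<Longrightarrow> ultrametric_on A d"
  unfolding ultrametric_on_def by blast

lemma ultrametric_on_compose:
  "ultrametric_on B d \<Longrightarrow> f ` A \<subseteq> B \<Longrightarrow> ultrametric_on A (\<lambda>x y. d (f x) (f y))"
  unfolding ultrametric_on_def by (simp add: image_subset_iff)

lemma cograph_if_no_induced_P4:
  assumes "\<And>a b c d. a \<in> L \<Longrightarrow> b \<in> L \<Longrightarrow> c \<in> L \<Longrightarrow> d \<in> L \<Longrightarrow> distinct [a, b, c, d] \<Longrightarrow>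
     R (t a b) (s a b) \<Longrightarrow> R (t b c) (s b c) \<Longrightarrow> R (t c d) (s c d) \<Longrightarrow>
     \<not> R (t a c) (s a c) \<Longrightarrow> \<not> R (t b d) (s b d) \<Longrightarrow> \<not> R (t a d) (s a d) \<Longrightarrow> False"
  shows "cograph L (\<lambda>x y. x \<noteq> y \<and> R (t x y) (s x y))"
  unfolding cograph_def using assms by auto

lemma cograph_less_of_ultrametric:
  fixes t s :: "'a \<Rightarrow> 'a \<Rightarrow> real"
  assumes t: "ultrametric_on L t" and s: "ultrametric_on L s"
  shows "cograph L (\<lambda>x y. x \<noteq> y \<and> t x y < s x y)"
proof (rule cograph_if_no_induced_P4)
  fix a b c d
  assume L: "a \<in> L" "b \<in> L" "c \<in> L" "d \<in> L"
    and edges: "t a b < s a b" "t b c < s b c" "t c d < s c d"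
    and non_edges: "\<not> t a c < s a c" "\<not> t b d < s b d" "\<not> t a d < s a d"
  have t_ac: "t a c < max (s a b) (s b c)"
    using ultrametric_on_le_max[OF t L(1-3)] edges by linarith
  then have s_abc: "s a b = s b c"
    using ultrametric_on_isosceles[OF s L(1-3)] non_edges by linarith
  have t_bd: "t b d < max (s b c) (s c d)"
    using ultrametric_on_le_max[OF t L(2-4)] edges by linarith
  then have s_bcd: "s b c = s c d"
    using ultrametric_on_isosceles[OF s L(2-4)] non_edges by linarith
  have "s b d < max (s b a) (s a d)"
    using t_bd s_abc s_bcd ultrametric_on_commute[OF s L(1,2)] non_edges by linarith
  then have s_abd: "s b a = s a d"
    using ultrametric_on_isosceles[OF s L(2,1,4)] by blast
  have "t c d < max (t c a) (t a d)"
    using s_abd s_abc s_bcd ultrametric_on_commute[OF s L(1,2)] edges non_edges by linarith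
  then have "t c a = t a d"
    using ultrametric_on_isosceles[OF t L(3,1,4)] by blast
  then show False
    using t_ac s_abd s_abc ultrametric_on_commute[OF s L(1,2)] ultrametric_on_commute[OF t L(1,3)]
      non_edges by linarith
qed

lemma cograph_equal_of_strict_ultrametric:
  fixes t s :: "'a \<Rightarrow> 'a \<Rightarrow> real"
  assumes t: "ultrametric_on L t" and s: "ultrametric_on L s"
    and t_strict: "\<And>x y z. x \<in> L \<Longrightarrow> y \<in> L \<Longrightarrow> z \<in> L \<Longrightarrow> distinct [x, y, z] \<Longrightarrow>
      \<not> (t x y = t y z \<and> t y z = t x z)"
    and s_strict: "\<And>x y z. x \<in> L \<Longrightarrow> y \<in> L \<Longrightarrow> z \<in> L \<Longrightarrow> distinct [x, y, z] \<Longrightarrow>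
      t x y = s x y \<Longrightarrow> \<not> (s x y = s y z \<and> s y z = s x z)"
  shows "cograph L (\<lambda>x y. x \<noteq> y \<and> t x y = s x y)"
proof (rule cograph_if_no_induced_P4)
  have induced_P3: "t x y = t y z \<and> t x z < t x y \<and> s x z < t x y"
    if L: "x \<in> L" "y \<in> L" "z \<in> L" "distinct [x, y, z]"
      and edges: "t x y = s x y" "t y z = s y z" and non_edge: "t x z \<noteq> s x z" for x y z
  proof -
    have "t x y = t y z"
    proof (rule ccontr)
      assume "t x y \<noteq> t y z"
      then have "t x z = s x z"
        using ultrametric_on_eq_max[OF t L(1-3)] ultrametric_on_eq_max[OF s L(1-3)] edges by simp
      with non_edge show False by blast
    qed
    moreover from this have "t x z \<noteq> t x y" "s x z \<noteq> t x y"
      using t_strict[OF L] s_strict[OF L] edges by auto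
    ultimately show ?thesis
      using ultrametric_on_le_max[OF t L(1-3)] ultrametric_on_le_max[OF s L(1-3)] edges by auto
  qed
  fix a b c d
  assume L: "a \<in> L" "b \<in> L" "c \<in> L" "d \<in> L" and "distinct [a, b, c, d]"
    and edges: "t a b = s a b" "t b c = s b c" "t c d = s c d"
    and non_edges: "t a c \<noteq> s a c" "t b d \<noteq> s b d" "t a d \<noteq> s a d"
  then have abc: "distinct [a, b, c]" and bcd: "distinct [b, c, d]" by auto
  have "t a b = t b c" "t b d < t b c" "s b d < t b c"
    using induced_P3[OF L(1-3) abc edges(1,2) non_edges(1)]
      induced_P3[OF L(2-4) bcd edges(2,3) non_edges(2)] by auto
  then have "t b a = t a d" "s b a = s a d"
    using ultrametric_on_isosceles[OF t L(2,1,4)] ultrametric_on_isosceles[OF s L(2,1,4)]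
      ultrametric_on_commute[OF t L(1,2)] ultrametric_on_commute[OF s L(1,2)] edges(1) by auto
  then show False
    using ultrametric_on_commute[OF t L(1,2)] ultrametric_on_commute[OF s L(1,2)] edges(1)
      non_edges(3) by simp
qed

lemma lca_commute: "lca V E x y = lca V E y x"
  unfolding lca_def by (metis (no_types, opaque_lifting))

lemma leaf_descendant_eq: "x \<in> leaves V E \<Longrightarrow> (x, y) \<in> E\<^sup>* \<Longrightarrow> y = x"
  unfolding leaves_def children_def by (auto elim: converse_rtranclE)

lemma time_map_mono:
  assumes "time_map V E \<tau>" "u \<in> V" "v \<in> V" "(u, v) \<in> E\<^sup>*"
  shows "\<tau> v \<le> \<tau> u"
  using assms unfolding time_map_def by (metis less_imp_le order_refl rtrancl_eq_or_trancl)

lemma time_map_strict_mono: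
  assumes "time_map V E \<tau>" "u \<in> V" "v \<in> V" "(u, v) \<in> E\<^sup>*" "u \<noteq> v"
  shows "\<tau> v < \<tau> u"
  using assms unfolding time_map_def by (simp add: rtrancl_eq_or_trancl)

locale planted =
  fixes V :: "'a set" and E :: "('a \<times> 'a) set" and r0 :: 'a
  assumes planted: "planted_tree V E r0"
begin

lemma finite_V: "finite V"
  and edges_subset: "E \<subseteq> V \<times> V"
  and root_in_V: "r0 \<in> V"
  and root_no_parent: "(u, r0) \<notin> E"
  and unique_parent: "v \<in> V \<Longrightarrow> v \<noteq> r0 \<Longrightarrow> \<exists>!u. (u, v) \<in> E"
  and root_reaches: "v \<in> V \<Longrightarrow> (r0, v) \<in> E\<^sup>*"
  and card_children_root: "card (children E r0) = 1"
  using planted unfolding planted_tree_def by blast+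

lemma parent_eq: "(u, v) \<in> E \<Longrightarrow> (w, v) \<in> E \<Longrightarrow> u = w"
  using unique_parent edges_subset root_no_parent by blast

lemma ancestor_in_V:
  assumes "(u, v) \<in> E\<^sup>*" "v \<in> V" shows "u \<in> V"
  using assms edges_subset by (induction rule: converse_rtrancl_induct) auto

lemma ancestors_comparable:
  "(a, v) \<in> E\<^sup>* \<Longrightarrow> (b, v) \<in> E\<^sup>* \<Longrightarrow> (a, b) \<in> E\<^sup>* \<or> (b, a) \<in> E\<^sup>*"
proof (induction arbitrary: b rule: rtrancl_induct)
  case (step w v)
  show ?case
  proof (cases "b = v")
    case False
    then obtain w' where "(b, w') \<in> E\<^sup>*" "(w', v) \<in> E"
      using step.prems by (metis rtranclE)
    with step parent_eq show ?thesis by blast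
  qed (use step in auto)
qed auto

lemma not_on_cycle: "(r0, v) \<in> E\<^sup>* \<Longrightarrow> (v, v) \<notin> E\<^sup>+"
proof (induction rule: rtrancl_induct)
  case base
  show ?case using root_no_parent by (metis tranclE)
next
  case (step w v)
  show ?case
  proof
    assume "(v, v) \<in> E\<^sup>+"
    then obtain w' where "(v, w') \<in> E\<^sup>*" "(w', v) \<in> E" by (metis tranclD2)
    with step.hyps(2) parent_eq have "(w, w) \<in> E\<^sup>+"
      by (metis rtrancl_into_trancl2)
    with step.IH show False by blast
  qed
qed

lemma acyclic: "(v, v) \<notin> E\<^sup>+"
  using not_on_cycle root_reaches trancl_subset_Sigma[OF edges_subset] by blast

lemma ancestor_antisym: "(x, y) \<in> E\<^sup>* \<Longrightarrow> (y, x) \<in> E\<^sup>* \<Longrightarrow> x = y"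
  using acyclic by (metis rtrancl_eq_or_trancl trancl_rtrancl_trancl)

lemma lca_unique_exists:
  assumes "x \<in> V" "y \<in> V"
  shows "\<exists>!z. z \<in> V \<and> (z, x) \<in> E\<^sup>* \<and> (z, y) \<in> E\<^sup>* \<and>
    (\<forall>w\<in>V. (w, x) \<in> E\<^sup>* \<and> (w, y) \<in> E\<^sup>* \<longrightarrow> (w, z) \<in> E\<^sup>*)"
proof -
  define Q where "Q = {z \<in> V. (z, x) \<in> E\<^sup>* \<and> (z, y) \<in> E\<^sup>*}"
  have "finite E"
    using finite_V edges_subset by (meson finite_SigmaI finite_subset)
  moreover have "acyclic (E\<inverse>)"
    using acyclic by (simp add: acyclic_def trancl_converse)
  ultimately have "wf (E\<inverse>)"
    by (simp add: wf_iff_acyclic_if_finite)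
  moreover have "r0 \<in> Q"
    unfolding Q_def using assms root_reaches root_in_V by simp
  ultimately obtain z where z: "z \<in> Q" and lowest: "\<And>c. (z, c) \<in> E \<Longrightarrow> c \<notin> Q"
    by (metis converseI wfE_min)
  have "(w, z) \<in> E\<^sup>*" if "(w, x) \<in> E\<^sup>*" "(w, y) \<in> E\<^sup>*" for w
  proof (rule ccontr)
    assume "(w, z) \<notin> E\<^sup>*"
    then have "(z, w) \<in> E\<^sup>*" "z \<noteq> w"
      using ancestors_comparable that(1) z by (auto simp: Q_def)
    then obtain c where "(z, c) \<in> E" "(c, w) \<in> E\<^sup>*"
      by (metis converse_rtranclE)
    then have "c \<in> Q"
      using that ancestor_in_V assms(1) by (auto simp: Q_def intro: rtrancl_trans)
    with lowest \<open>(z, c) \<in> E\<close> show False by blast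
  qed
  with z have "z \<in> V \<and> (z, x) \<in> E\<^sup>* \<and> (z, y) \<in> E\<^sup>* \<and>
    (\<forall>w\<in>V. (w, x) \<in> E\<^sup>* \<and> (w, y) \<in> E\<^sup>* \<longrightarrow> (w, z) \<in> E\<^sup>*)"
    by (simp add: Q_def)
  then show ?thesis
    using ancestor_antisym by blast
qed

lemma lca_spec:
  assumes "x \<in> V" "y \<in> V"
  shows "lca V E x y \<in> V \<and> (lca V E x y, x) \<in> E\<^sup>* \<and> (lca V E x y, y) \<in> E\<^sup>* \<and>
    (\<forall>w\<in>V. (w, x) \<in> E\<^sup>* \<and> (w, y) \<in> E\<^sup>* \<longrightarrow> (w, lca V E x y) \<in> E\<^sup>*)"
  unfolding lca_def by (rule theI'[OF lca_unique_exists[OF assms]])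

lemma lca_in_V: "x \<in> V \<Longrightarrow> y \<in> V \<Longrightarrow> lca V E x y \<in> V"
  using lca_spec by blast

lemma lca_ancestor_left: "x \<in> V \<Longrightarrow> y \<in> V \<Longrightarrow> (lca V E x y, x) \<in> E\<^sup>*"
  using lca_spec by blast

lemma lca_ancestor_right: "x \<in> V \<Longrightarrow> y \<in> V \<Longrightarrow> (lca V E x y, y) \<in> E\<^sup>*"
  using lca_spec by blast

lemma lca_greatest:
  "x \<in> V \<Longrightarrow> y \<in> V \<Longrightarrow> (w, x) \<in> E\<^sup>* \<Longrightarrow> (w, y) \<in> E\<^sup>* \<Longrightarrow> (w, lca V E x y) \<in> E\<^sup>*"
  using lca_spec ancestor_in_V by blast

lemma lca_self: "x \<in> V \<Longrightarrow> lca V E x x = x"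
  using lca_ancestor_left lca_greatest ancestor_antisym by blast

lemma lca_leaf_neq: "x \<in> leaves V E \<Longrightarrow> y \<in> V \<Longrightarrow> y \<noteq> x \<Longrightarrow> lca V E x y \<noteq> x"
  using lca_ancestor_right leaf_descendant_eq by (metis leaves_def mem_Collect_eq)

lemma lca_below_lca_disj:
  assumes "x \<in> V" "y \<in> V" "z \<in> V"
  shows "(lca V E x y, lca V E x z) \<in> E\<^sup>* \<or> (lca V E y z, lca V E x z) \<in> E\<^sup>*"
  using ancestors_comparable[OF lca_ancestor_right lca_ancestor_left] assms
    lca_ancestor_left lca_ancestor_right lca_greatest
  by (meson rtrancl_trans)

lemma ultrametric_on_lca_time:
  assumes "time_map V E \<tau>"
  shows "ultrametric_on V (\<lambda>x y. \<tau> (lca V E x y))"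
  unfolding ultrametric_on_def
proof (intro conjI ballI)
  fix x y z assume "x \<in> V" "y \<in> V" "z \<in> V"
  then show "\<tau> (lca V E x z) \<le> max (\<tau> (lca V E x y)) (\<tau> (lca V E y z))"
    using lca_below_lca_disj time_map_mono[OF assms] lca_in_V
    by (metis max.coboundedI1 max.coboundedI2)
qed (simp add: lca_commute)

lemma ancestors_eq_if_time_eq:
  assumes "time_map V E \<tau>" "(u, w) \<in> E\<^sup>*" "(v, w) \<in> E\<^sup>*" "w \<in> V" "\<tau> u = \<tau> v"
  shows "u = v"
  using ancestors_comparable[OF assms(2,3)] time_map_strict_mono[OF assms(1)]
    ancestor_in_V[OF assms(2,4)] ancestor_in_V[OF assms(3,4)] assms(5)
  by (metis less_irrefl)

lemma card_children_le_2:
  assumes "binary_tree V E r0" "v \<in> V"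
  shows "card (children E v) \<le> 2"
  using assms card_children_root unfolding binary_tree_def leaves_def
  by (cases "v = r0") auto

lemma child_of_lca_not_common_ancestor:
  assumes "x \<in> V" "y \<in> V" "(lca V E x y, c) \<in> E" "(c, x) \<in> E\<^sup>*" "(c, y) \<in> E\<^sup>*"
  shows False
proof -
  have "(c, lca V E x y) \<in> E\<^sup>*"
    using lca_greatest assms by blast
  with assms(3) have "(c, c) \<in> E\<^sup>+"
    by (meson rtrancl_into_trancl1)
  with acyclic show False by blast
qed

lemma lca_leaves_not_all_equal:
  assumes "binary_tree V E r0" and leaves: "p \<in> leaves V E" "q \<in> leaves V E" "r \<in> leaves V E"
    and "p \<noteq> q"
  shows "\<not> (lca V E p q = lca V E q r \<and> lca V E q r = lca V E p r)"
proof
  assume "lca V E p q = lca V E q r \<and> lca V E q r = lca V E p r"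
  then obtain v where pq: "lca V E p q = v" and qr: "lca V E q r = v" and pr: "lca V E p r = v"
    by metis
  have V: "p \<in> V" "q \<in> V" "r \<in> V"
    using leaves by (simp_all add: leaves_def)
  have "v \<noteq> p"
    using lca_leaf_neq[OF leaves(1) V(2)] \<open>p \<noteq> q\<close> pq by simp
  have "v \<noteq> q"
    using lca_leaf_neq[OF leaves(2) V(1)] \<open>p \<noteq> q\<close> pq by (simp add: lca_commute)
  have "r \<noteq> p"
    using pr lca_self[OF V(1)] \<open>v \<noteq> p\<close> by auto
  have "v \<noteq> r"
    using lca_leaf_neq[OF leaves(3) V(1)] \<open>r \<noteq> p\<close> pr by (simp add: lca_commute)
  have child_towards: "\<exists>c. (v, c) \<in> E \<and> (c, l) \<in> E\<^sup>*" if "(v, l) \<in> E\<^sup>*" "v \<noteq> l" for l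
    using that by (metis converse_rtranclE)
  obtain cp where cp: "(v, cp) \<in> E" "(cp, p) \<in> E\<^sup>*"
    using child_towards[OF _ \<open>v \<noteq> p\<close>] lca_ancestor_left[OF V(1,2)] pq by auto
  obtain cq where cq: "(v, cq) \<in> E" "(cq, q) \<in> E\<^sup>*"
    using child_towards[OF _ \<open>v \<noteq> q\<close>] lca_ancestor_right[OF V(1,2)] pq by auto
  obtain cr where cr: "(v, cr) \<in> E" "(cr, r) \<in> E\<^sup>*"
    using child_towards[OF _ \<open>v \<noteq> r\<close>] lca_ancestor_right[OF V(1,3)] pr by auto
  have "cp \<noteq> cq"
    using child_of_lca_not_common_ancestor[OF V(1,2), of cp] pq cp cq by auto
  moreover have "cq \<noteq> cr"
    using child_of_lca_not_common_ancestor[OF V(2,3), of cq] qr cq cr by auto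
  moreover have "cp \<noteq> cr"
    using child_of_lca_not_common_ancestor[OF V(1,3), of cp] pr cp cr by auto
  ultimately have "card {cp, cq, cr} = 3"
    by simp
  moreover have "{cp, cq, cr} \<subseteq> children E v"
    using cp cq cr by (simp add: children_def)
  moreover have "finite (children E v)"
    using finite_V edges_subset by (auto simp: children_def intro: finite_subset)
  moreover have "v \<in> V"
    using lca_in_V[OF V(1,2)] pq by simp
  ultimately show False
    using card_mono[of "children E v" "{cp, cq, cr}"] card_children_le_2[OF assms(1), of v]
    by simp
qed

lemma lca_time_leaves_not_all_equal:
  assumes "time_map V E \<tau>" "binary_tree V E r0"
    and leaves: "p \<in> leaves V E" "q \<in> leaves V E" "r \<in> leaves V E" and "p \<noteq> q"
  shows "\<not> (\<tau> (lca V E p q) = \<tau> (lca V E q r) \<and> \<tau> (lca V E q r) = \<tau> (lca V E p r))"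
proof
  assume eq: "\<tau> (lca V E p q) = \<tau> (lca V E q r) \<and> \<tau> (lca V E q r) = \<tau> (lca V E p r)"
  have V: "p \<in> V" "q \<in> V" "r \<in> V"
    using leaves by (simp_all add: leaves_def)
  have "lca V E p q = lca V E q r"
    using ancestors_eq_if_time_eq[OF assms(1) lca_ancestor_right[OF V(1,2)] lca_ancestor_left[OF V(2,3)]]
      V eq by simp
  moreover have "lca V E q r = lca V E p r"
    using ancestors_eq_if_time_eq[OF assms(1) lca_ancestor_right[OF V(2,3)] lca_ancestor_right[OF V(1,3)]]
      V eq by simp
  ultimately show False
    using lca_leaves_not_all_equal[OF assms(2-6)] by simp
qed

end

locale scenario =
  fixes VT :: "'g set" and ET :: "('g \<times> 'g) set" and r0T :: 'g
    and VS :: "'s set" and ES :: "('s \<times> 's) set" and r0S :: 's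
    and \<sigma> :: "'g \<Rightarrow> 's" and \<mu> :: "'g \<Rightarrow> 's vert_or_edge"
    and \<tau>T :: "'g \<Rightarrow> real" and \<tau>S :: "'s \<Rightarrow> real"
  assumes relaxed: "relaxed_scenario VT ET r0T VS ES r0S \<sigma> \<mu> \<tau>T \<tau>S"
begin

sublocale T: planted VT ET r0T
  using relaxed by (simp add: planted_def relaxed_scenario_def phylo_tree_def)

sublocale S: planted VS ES r0S
  using relaxed by (simp add: planted_def relaxed_scenario_def phylo_tree_def)

abbreviation gene_time :: "'g \<Rightarrow> 'g \<Rightarrow> real" where
  "gene_time x y \<equiv> \<tau>T (lca VT ET x y)"

abbreviation species_time :: "'g \<Rightarrow> 'g \<Rightarrow> real" where
  "species_time x y \<equiv> \<tau>S (lca VS ES (\<sigma> x) (\<sigma> y))"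

lemma time_maps: "time_map VT ET \<tau>T" "time_map VS ES \<tau>S"
  using relaxed by (simp_all add: relaxed_scenario_def)

lemma species_of_leaf: "x \<in> leaves VT ET \<Longrightarrow> \<sigma> x \<in> leaves VS ES"
  using relaxed by (auto simp: relaxed_scenario_def)

lemma leaf_time_eq: "x \<in> leaves VT ET \<Longrightarrow> \<tau>S (\<sigma> x) = \<tau>T x"
  using relaxed by (auto simp: relaxed_scenario_def leaves_def)

lemma G_rel_eq:
  "G_rel R VT ET VS ES \<sigma> \<tau>T \<tau>S = (\<lambda>x y. x \<noteq> y \<and> R (gene_time x y) (species_time x y))"
  by (simp add: G_rel_def[abs_def])

lemma ultrametric_on_gene_time: "ultrametric_on (leaves VT ET) gene_time"
  by (rule ultrametric_on_subset[OF T.ultrametric_on_lca_time[OF time_maps(1)]])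
    (auto simp: leaves_def)

lemma ultrametric_on_species_time: "ultrametric_on (leaves VT ET) species_time"
  by (rule ultrametric_on_compose[OF S.ultrametric_on_lca_time[OF time_maps(2)]])
    (use species_of_leaf in \<open>auto simp: leaves_def\<close>)

lemma same_species_time_less:
  assumes x: "x \<in> leaves VT ET" and y: "y \<in> leaves VT ET" and "x \<noteq> y" "\<sigma> x = \<sigma> y"
  shows "species_time x y < gene_time x y"
proof -
  have "x \<in> VT" "y \<in> VT" "\<sigma> x \<in> VS"
    using x y species_of_leaf[OF x] by (simp_all add: leaves_def)
  then have "species_time x y = \<tau>T x"
    using S.lca_self leaf_time_eq[OF x] \<open>\<sigma> x = \<sigma> y\<close> by simp
  also have "\<dots> < gene_time x y"
    using time_map_strict_mono[OF time_maps(1) T.lca_in_V \<open>x \<in> VT\<close> T.lca_ancestor_left]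
      T.lca_leaf_neq[OF x \<open>y \<in> VT\<close>] \<open>x \<in> VT\<close> \<open>y \<in> VT\<close> \<open>x \<noteq> y\<close>
    by simp
  finally show ?thesis .
qed

lemma species_time_strict:
  assumes "binary_tree VS ES r0S" and leaves: "x \<in> leaves VT ET" "y \<in> leaves VT ET" "z \<in> leaves VT ET"
    and "x \<noteq> y" "gene_time x y = species_time x y"
  shows "\<not> (species_time x y = species_time y z \<and> species_time y z = species_time x z)"
proof -
  have "\<sigma> x \<noteq> \<sigma> y"
    using same_species_time_less[OF leaves(1,2) \<open>x \<noteq> y\<close>] \<open>gene_time x y = species_time x y\<close>
    by fastforce
  then show ?thesis
    using S.lca_time_leaves_not_all_equal[OF time_maps(2) assms(1)] species_of_leaf leaves by simp
qed

end

theorem theorem1: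
  fixes VT :: "'g set" and ET :: "('g \<times> 'g) set" and r0T :: 'g
    and VS :: "'s set" and ES :: "('s \<times> 's) set" and r0S :: 's
    and \<sigma> :: "'g \<Rightarrow> 's" and \<mu> :: "'g \<Rightarrow> 's vert_or_edge"
    and \<tau>T :: "'g \<Rightarrow> real" and \<tau>S :: "'s \<Rightarrow> real"
  assumes "relaxed_scenario VT ET r0T VS ES r0S \<sigma> \<mu> \<tau>T \<tau>S"
  shows "cograph (leaves VT ET) (G_rel (<) VT ET VS ES \<sigma> \<tau>T \<tau>S) \<and>
         cograph (leaves VT ET) (G_rel (>) VT ET VS ES \<sigma> \<tau>T \<tau>S) \<and>
         (binary_tree VT ET r0T \<and> binary_tree VS ES r0S \<longrightarrow>
           cograph (leaves VT ET) (G_rel (=) VT ET VS ES \<sigma> \<tau>T \<tau>S))"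
proof -
  interpret scenario VT ET r0T VS ES r0S \<sigma> \<mu> \<tau>T \<tau>S
    using assms by (rule scenario.intro)
  note t = ultrametric_on_gene_time and s = ultrametric_on_species_time
  have "cograph (leaves VT ET) (\<lambda>x y. x \<noteq> y \<and> gene_time x y = species_time x y)"
    if "binary_tree VT ET r0T" "binary_tree VS ES r0S"
    by (rule cograph_equal_of_strict_ultrametric[OF t s])
      (use T.lca_time_leaves_not_all_equal[OF time_maps(1) that(1)] species_time_strict[OF that(2)]
        in auto)
  then show ?thesis
    using cograph_less_of_ultrametric[OF t s] cograph_less_of_ultrametric[OF s t]
    unfolding G_rel_eq by simp
qed

end
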